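(* Let $d\geq 2$, energies $E_1\leq\dots\leq E_d$, inverse temperatures $\alpha>\beta\geq 0$, and $\gamma_k=e^{-\alpha E_k}/\sum_i e^{-\alpha E_i}$, $\Gamma_k=e^{-\beta E_k}/\sum_i e^{-\beta E_i}$. Define $$\tilde{\gamma}_1=\frac{\Gamma_1(\gamma_1-\gamma_d)}{\Gamma_1(1-\gamma_d)-\Gamma_d(1-\gamma_1)},\qquad \tilde{\Gamma}_d=\frac{\Gamma_d(\gamma_1-\gamma_d)}{\Gamma_1(1-\gamma_d)-\Gamma_d(1-\gamma_1)}.$$ For $d$-dimensional probability distributions $\mathbf{p}$ and $\mathbf{q}$ satisfying $\Gamma_d\leq p_d\leq\tilde{\Gamma}_d$ and $\gamma_1\leq q_1\leq\tilde{\gamma}_1$, there exist probability distributions $\mathbf{p}',\mathbf{p}'',\mathbf{q}',\mathbf{q}''$ such that $$\mathbf{p}\succ_{\boldsymbol{\gamma}}\mathbf{p}'\succ_{\boldsymbol{\Gamma}}\mathbf{p}'',\qquad \mathbf{q}\succ_{\boldsymbol{\Gamma}}\mathbf{q}'\succ_{\boldsymbol{\gamma}}\mathbf{q}'',$$ and $$p_d''=\frac{(1-\gamma_1)\Gamma_d}{(1-\gamma_d)\Gamma_1}p_d+\frac{(\gamma_1-\gamma_d)\Gamma_d}{(1-\gamma_d)\Gamma_1},\qquad q_1''=\frac{(1-\gamma_1)\Gamma_d}{(1-\gamma_d)\Gamma_1}q_1+\frac{\gamma_1-\gamma_d}{1-\gamma_d},$$ so that $p_d\leq p_d''\leq\tilde{\Gamma}_d$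 and $q_1\leq q_1''\leq\tilde{\gamma}_1$.
   Context: For a full-support probability vector $\mathbf{g}$, $\mathbf{p}\succ_{\mathbf{g}}\mathbf{q}$ (thermomajorisation) means: ordering indices by a permutation $\pi$ with $p_{\pi_i}/g_{\pi_i}$ non-increasing in $i$, the piecewise linear curve through the points $\left(\sum_{i\leq j}g_{\pi_i},\sum_{i\leq j}p_{\pi_i}\right)$, $j=0,\dots,d$, is nowhere below the analogous curve of $\mathbf{q}$. *)

theory Defs
  imports "HOL-Analysis.Analysis" "HOL-Combinatorics.Permutations"
begin

text \<open>Vectors in R^d are functions nat => real; only indices 1..d matter.\<close>

definition prob_vec :: "nat \<Rightarrow> (nat \<Rightarrow> real) \<Rightarrow> bool" where
  "prob_vec d p \<longleftrightarrow> (\<forall>i\<in>{1..d}. 0 \<le> p i) \<and> (\<Sum>i=1..d. p i) = 1"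

definition gibbs :: "nat \<Rightarrow> (nat \<Rightarrow> real) \<Rightarrow> real \<Rightarrow> nat \<Rightarrow> real" where
  "gibbs d E b k = exp (- b * E k) / (\<Sum>i=1..d. exp (- b * E i))"

definition cum :: "(nat \<Rightarrow> real) \<Rightarrow> (nat \<Rightarrow> nat) \<Rightarrow> nat \<Rightarrow> real" where
  "cum v \<pi> j = (\<Sum>i=1..j. v (\<pi> i))"

definition ratio_order :: "nat \<Rightarrow> (nat \<Rightarrow> real) \<Rightarrow> (nat \<Rightarrow> real) \<Rightarrow> (nat \<Rightarrow> nat) \<Rightarrow> bool" where
  "ratio_order d p g \<pi> \<longleftrightarrow> \<pi> permutes {1..d} \<and>
     (\<forall>i j. 1 \<le> i \<longrightarrow> i \<le> j \<longrightarrow> j \<le> d \<longrightarrow> p (\<pi> j) / g (\<pi> j) \<le> p (\<pi> i) / g (\<pi> i))"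

text \<open>(x,y) lies on the piecewise linear curve through the points
  (cum g pi j, cum p pi j), j = 0..d.\<close>
definition on_curve :: "nat \<Rightarrow> (nat \<Rightarrow> real) \<Rightarrow> (nat \<Rightarrow> real) \<Rightarrow> (nat \<Rightarrow> nat) \<Rightarrow> real \<Rightarrow> real \<Rightarrow> bool" where
  "on_curve d p g \<pi> x y \<longleftrightarrow> (\<exists>j\<in>{1..d}.
     cum g \<pi> (j - 1) \<le> x \<and> x \<le> cum g \<pi> j \<and>
     y = cum p \<pi> (j - 1) + (x - cum g \<pi> (j - 1)) / (cum g \<pi> j - cum g \<pi> (j - 1))
                           * (cum p \<pi> j - cum p \<pi> (j - 1)))"

text \<open>Thermomajorisation p \<succ>_g q: the curve of p is nowhere below the curve of q.\<close>
definition thermo_maj :: "nat \<Rightarrow> (nat \<Rightarrow> real) \<Rightarrow> (nat \<Rightarrow> real) \<Rightarrow> (nat \<Rightarrow> real) \<Rightarrow> bool" where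
  "thermo_maj d g p q \<longleftrightarrow> (\<exists>\<pi> \<sigma>. ratio_order d p g \<pi> \<and> ratio_order d q g \<sigma> \<and>
     (\<forall>x y z. on_curve d p g \<pi> x y \<longrightarrow> on_curve d q g \<sigma> x z \<longrightarrow> z \<le> y))"

end

theory Submission
  imports Defs
begin

(* The curve of a relative to g, evaluated at x, is the maximum of t |-> a.t over the box [0,1]^d
   subject to g.t = x: a fractional knapsack problem, solved greedily by filling the levels in
   the order of decreasing a_i / g_i.  Hence a thermomajorises b as soon as every box vector t
   has a box vector t' with g.t' = g.t and b.t <= a.t'; when b = M a for a stochastic matrix M
   with M g = g, the vector t' = M^T t does this.

   Each chain consists of two such Gibbs-preserving maps: the partial swap of the levels 1 and d
   with ratio Gamma_d / Gamma_1, which fixes Gamma, and the map top_to_ground, which fixes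
   gamma.  The resulting p''_d and q''_1 are the images of p_d and q_1 under increasing affine
   maps with the common slope (1 - gamma_1) Gamma_d / ((1 - gamma_d) Gamma_1) < 1, whose fixed
   points are exactly the tilde bounds; this gives p_d <= p''_d <= tilde Gamma_d and
   q_1 <= q''_1 <= tilde gamma_1. *)

definition dot :: "nat \<Rightarrow> (nat \<Rightarrow> real) \<Rightarrow> (nat \<Rightarrow> real) \<Rightarrow> real" where
  "dot d u v = (\<Sum>i=1..d. u i * v i)"

definition unit_box :: "nat \<Rightarrow> (nat \<Rightarrow> real) set" where
  "unit_box d = {t. \<forall>i\<in>{1..d}. 0 \<le> t i \<and> t i \<le> 1}"

definition greedy_fill :: "(nat \<Rightarrow> nat) \<Rightarrow> nat \<Rightarrow> real \<Rightarrow> nat \<Rightarrow> real" where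
  "greedy_fill \<pi> j \<theta> i = (if inv \<pi> i < j then 1 else if inv \<pi> i = j then \<theta> else 0)"

lemma cum_diff: "1 \<le> j \<Longrightarrow> cum v \<pi> j - cum v \<pi> (j - 1) = v (\<pi> j)"
  unfolding cum_def by (cases j) auto

lemma greedy_fill_in_unit_box: "0 \<le> \<theta> \<Longrightarrow> \<theta> \<le> 1 \<Longrightarrow> greedy_fill \<pi> j \<theta> \<in> unit_box d"
  unfolding unit_box_def greedy_fill_def by auto

lemma dot_greedy_fill:
  assumes perm: "\<pi> permutes {1..d}" and j: "j \<in> {1..d}"
  shows "dot d v (greedy_fill \<pi> j \<theta>) = cum v \<pi> (j - 1) + \<theta> * v (\<pi> j)"
proof -
  have "dot d v (greedy_fill \<pi> j \<theta>) = (\<Sum>k=1..d. v (\<pi> k) * greedy_fill \<pi> j \<theta> (\<pi> k))"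
    unfolding dot_def using sum.permute[OF perm, of "\<lambda>i. v i * greedy_fill \<pi> j \<theta> i"] by simp
  also have "\<dots> = (\<Sum>k=1..d. (if k \<in> {..<j} then v (\<pi> k) else 0) + (if k = j then \<theta> * v (\<pi> k) else 0))"
    by (intro sum.cong) (auto simp: greedy_fill_def permutes_inverses(2)[OF perm])
  also have "\<dots> = (\<Sum>k\<in>{1..d} \<inter> {..<j}. v (\<pi> k)) + \<theta> * v (\<pi> j)"
    using j by (simp add: sum.distrib sum.inter_restrict)
  also have "{1..d} \<inter> {..<j} = {1..j - 1}"
    using j by auto
  finally show ?thesis
    unfolding cum_def .
qed

lemma on_curve_greedy_fill:
  assumes perm: "\<pi> permutes {1..d}" and g_pos: "\<forall>i\<in>{1..d}. 0 < g i"
    and "on_curve d a g \<pi> x y"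
  obtains j \<theta> where "j \<in> {1..d}" "0 \<le> \<theta>" "\<theta> \<le> 1"
    "dot d g (greedy_fill \<pi> j \<theta>) = x" "dot d a (greedy_fill \<pi> j \<theta>) = y"
proof -
  obtain j where j: "j \<in> {1..d}" and x: "cum g \<pi> (j - 1) \<le> x" "x \<le> cum g \<pi> j"
    and y: "y = cum a \<pi> (j - 1) + (x - cum g \<pi> (j - 1)) / (cum g \<pi> j - cum g \<pi> (j - 1))
                 * (cum a \<pi> j - cum a \<pi> (j - 1))"
    using assms(3) unfolding on_curve_def by blast
  define \<theta> where "\<theta> = (x - cum g \<pi> (j - 1)) / g (\<pi> j)"
  have "0 < g (\<pi> j)"
    using g_pos permutes_in_image[OF perm] j by blast
  moreover have "cum g \<pi> j = cum g \<pi> (j - 1) + g (\<pi> j)"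
    using cum_diff[of j g \<pi>] j by simp
  ultimately have "0 \<le> \<theta>" "\<theta> \<le> 1" "dot d g (greedy_fill \<pi> j \<theta>) = x"
    using x dot_greedy_fill[OF perm j] by (auto simp: \<theta>_def field_simps)
  moreover have "dot d a (greedy_fill \<pi> j \<theta>) = y"
    using y dot_greedy_fill[OF perm j] cum_diff[of j _ \<pi>] j by (simp add: \<theta>_def)
  ultimately show ?thesis
    using that j by blast
qed

lemma greedy_fill_maximal:
  assumes order: "ratio_order d a g \<pi>" and g_pos: "\<forall>i\<in>{1..d}. 0 < g i"
    and j: "j \<in> {1..d}" and t: "t \<in> unit_box d"
    and same_weight: "dot d g t = dot d g (greedy_fill \<pi> j \<theta>)"
  shows "dot d a t \<le> dot d a (greedy_fill \<pi> j \<theta>)"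
proof -
  define s where "s = greedy_fill \<pi> j \<theta>"
  define r where "r = a (\<pi> j) / g (\<pi> j)"
  have perm: "\<pi> permutes {1..d}"
    using order unfolding ratio_order_def by simp
  have pointwise: "r * (g i * (s i - t i)) \<le> a i * (s i - t i)" if i: "i \<in> {1..d}" for i
  proof -
    define k where "k = inv \<pi> i"
    have k: "k \<in> {1..d}"
      unfolding k_def using permutes_in_image[OF permutes_inv[OF perm]] i by blast
    have i_eq: "i = \<pi> k"
      unfolding k_def using permutes_inverses(1)[OF perm] by simp
    have "0 < g i" "0 \<le> t i" "t i \<le> 1"
      using g_pos t i unfolding unit_box_def by auto
    have ratio: "a (\<pi> m) / g (\<pi> m) \<le> a (\<pi> l) / g (\<pi> l)" if "l \<in> {1..d}" "m \<in> {1..d}" "l \<le> m" for l m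
      using order that unfolding ratio_order_def by auto
    have s_i: "s i = (if k < j then 1 else if k = j then \<theta> else 0)"
      unfolding s_def greedy_fill_def k_def ..
    consider "k < j" | "k = j" | "j < k" by linarith
    then show ?thesis
    proof cases
      case 1
      then have "r * g i \<le> a i"
        using ratio[OF k j] \<open>0 < g i\<close> by (simp add: r_def i_eq[symmetric] pos_le_divide_eq)
      then show ?thesis
        using 1 s_i \<open>t i \<le> 1\<close> mult_right_mono[of "r * g i" "a i" "1 - t i"] by (simp add: mult.assoc)
    next
      case 2
      then show ?thesis
        using \<open>0 < g i\<close> by (simp add: r_def i_eq)
    next
      case 3
      then have "a i \<le> r * g i"
        using ratio[OF j k] \<open>0 < g i\<close> by (simp add: r_def i_eq[symmetric] pos_divide_le_eq)
      then show ?thesis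
        using 3 s_i \<open>0 \<le> t i\<close> mult_right_mono[of "a i" "r * g i" "t i"] by (simp add: mult.assoc)
    qed
  qed
  have "(\<Sum>i=1..d. r * (g i * (s i - t i))) \<le> (\<Sum>i=1..d. a i * (s i - t i))"
    using pointwise by (intro sum_mono) auto
  then have "r * (dot d g s - dot d g t) \<le> dot d a s - dot d a t"
    by (simp add: dot_def sum_distrib_left right_diff_distrib sum_subtractf)
  then show ?thesis
    using same_weight by (simp add: s_def)
qed

lemma dot_le_on_curve:
  assumes order: "ratio_order d a g \<pi>" and g_pos: "\<forall>i\<in>{1..d}. 0 < g i"
    and curve: "on_curve d a g \<pi> x y" and t: "t \<in> unit_box d" "dot d g t = x"
  shows "dot d a t \<le> y"
proof -
  have "\<pi> permutes {1..d}"
    using order unfolding ratio_order_def by simp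
  then obtain j \<theta> where j: "j \<in> {1..d}"
    and fill: "dot d g (greedy_fill \<pi> j \<theta>) = x" "dot d a (greedy_fill \<pi> j \<theta>) = y"
    using on_curve_greedy_fill g_pos curve by blast
  show ?thesis
    using greedy_fill_maximal[OF order g_pos j t(1), of \<theta>] t(2) fill by simp
qed

lemma ratio_order_exists: "\<exists>\<pi>. ratio_order d a g \<pi>"
proof -
  define key where "key = (\<lambda>i. - (a i / g i))"
  define xs where "xs = sort_key key [1..<d+1]"
  have len: "length xs = d" and set_xs: "set xs = {1..d}" and "distinct xs"
    and sorted: "sorted (map key xs)"
    unfolding xs_def by auto
  define \<pi> where "\<pi> = (\<lambda>i. if i \<in> {1..d} then xs ! (i - 1) else i)"
  have "bij_betw ((!) xs \<circ> (\<lambda>i. i - 1)) {1..d} {1..d}"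
  proof (rule bij_betw_trans)
    show "bij_betw (\<lambda>i. i - 1) {1..d} {..<d}"
      by (rule bij_betw_byWitness[where f'="\<lambda>i. i + 1"]) auto
    show "bij_betw ((!) xs) {..<d} {1..d}"
      using \<open>distinct xs\<close> len set_xs by (intro bij_betw_nth) auto
  qed
  then have "bij_betw \<pi> {1..d} {1..d}"
    by (rule bij_betw_cong[THEN iffD1, rotated]) (auto simp: \<pi>_def)
  then have "\<pi> permutes {1..d}"
    by (rule bij_imp_permutes) (auto simp: \<pi>_def)
  moreover have "a (\<pi> j) / g (\<pi> j) \<le> a (\<pi> i) / g (\<pi> i)" if "1 \<le> i" "i \<le> j" "j \<le> d" for i j
    using sorted_nth_mono[OF sorted, of "i - 1" "j - 1"] that len
    by (simp add: key_def \<pi>_def)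
  ultimately show ?thesis
    unfolding ratio_order_def by blast
qed

lemma thermo_majI:
  assumes g_pos: "\<forall>i\<in>{1..d}. 0 < g i"
    and dominated: "\<And>t. t \<in> unit_box d \<Longrightarrow>
      \<exists>t'\<in>unit_box d. dot d g t' = dot d g t \<and> dot d b t \<le> dot d a t'"
  shows "thermo_maj d g a b"
proof -
  obtain \<pi> \<sigma> where order: "ratio_order d a g \<pi>" "ratio_order d b g \<sigma>"
    using ratio_order_exists by metis
  have "z \<le> y" if a_curve: "on_curve d a g \<pi> x y" and b_curve: "on_curve d b g \<sigma> x z" for x y z
  proof -
    have "\<sigma> permutes {1..d}"
      using order(2) unfolding ratio_order_def by simp
    then obtain j \<theta> where \<theta>: "0 \<le> \<theta>" "\<theta> \<le> 1"
      and fill: "dot d g (greedy_fill \<sigma> j \<theta>) = x" "dot d b (greedy_fill \<sigma> j \<theta>) = z"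
      using on_curve_greedy_fill g_pos b_curve by blast
    obtain t' where "t' \<in> unit_box d" "dot d g t' = x" "z \<le> dot d a t'"
      using dominated[OF greedy_fill_in_unit_box[OF \<theta>]] fill by auto
    then show ?thesis
      using dot_le_on_curve[OF order(1) g_pos a_curve] by fastforce
  qed
  then show ?thesis
    unfolding thermo_maj_def using order by blast
qed

lemma sum_first_last:
  fixes f :: "nat \<Rightarrow> 'a::comm_monoid_add"
  assumes "2 \<le> d"
  shows "(\<Sum>i=1..d. f i) = f 1 + f d + (\<Sum>i\<in>{1<..<d}. f i)"
proof -
  have "{1..d} = insert 1 (insert d {1<..<d})"
    using assms by auto
  then show ?thesis
    using assms by (simp add: add.assoc)
qed

lemma prob_vec_first_plus_last_le:
  assumes "2 \<le> d" "prob_vec d p"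
  shows "p 1 + p d \<le> 1"
proof -
  have "0 \<le> (\<Sum>i\<in>{1<..<d}. p i)"
    using assms(2) unfolding prob_vec_def by (intro sum_nonneg) auto
  then show ?thesis
    using assms sum_first_last[of d p] unfolding prob_vec_def by simp
qed

definition partial_swap :: "nat \<Rightarrow> real \<Rightarrow> (nat \<Rightarrow> real) \<Rightarrow> nat \<Rightarrow> real" where
  "partial_swap d r a = a(1 := (1 - r) * a 1 + a d, d := r * a 1)"

lemma prob_vec_partial_swap:
  assumes "2 \<le> d" "0 \<le> r" "r \<le> 1" "prob_vec d a"
  shows "prob_vec d (partial_swap d r a)"
proof -
  have nonneg: "\<forall>i\<in>{1..d}. 0 \<le> a i" and total: "(\<Sum>i=1..d. a i) = 1"
    using assms(4) unfolding prob_vec_def by auto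
  then have "0 \<le> a 1" "0 \<le> a d"
    using assms(1) by auto
  then have "0 \<le> partial_swap d r a i" if "i \<in> {1..d}" for i
    using nonneg that assms(2,3) by (auto simp: partial_swap_def)
  moreover have "(\<Sum>i\<in>{1<..<d}. partial_swap d r a i) = (\<Sum>i\<in>{1<..<d}. a i)"
    by (intro sum.cong) (auto simp: partial_swap_def)
  ultimately show ?thesis
    using assms(1) total sum_first_last[OF assms(1), of a]
      sum_first_last[OF assms(1), of "partial_swap d r a"]
    unfolding prob_vec_def by (simp add: partial_swap_def algebra_simps)
qed

lemma thermo_maj_partial_swap:
  assumes "2 \<le> d" and g_pos: "\<forall>i\<in>{1..d}. 0 < g i" and "g d \<le> g 1"
  shows "thermo_maj d g a (partial_swap d (g d / g 1) a)"
proof -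
  define r where "r = g d / g 1"
  have "d \<noteq> 1" "0 < g 1" "0 < g d"
    using assms by auto
  then have r: "0 \<le> r" "r \<le> 1" "g 1 * r = g d"
    using \<open>g d \<le> g 1\<close> unfolding r_def by simp_all
  have dot_split: "dot d u v = u 1 * v 1 + u d * v d + (\<Sum>i\<in>{1<..<d}. u i * v i)" for u v
    unfolding dot_def by (rule sum_first_last[OF assms(1)])
  have "\<exists>t'\<in>unit_box d. dot d g t' = dot d g t \<and> dot d (partial_swap d r a) t \<le> dot d a t'"
    if t: "t \<in> unit_box d" for t
  proof
    define t' where "t' = t(1 := r * t d + (1 - r) * t 1, d := t 1)"
    have "0 \<le> t 1" "t 1 \<le> 1" "0 \<le> t d" "t d \<le> 1"
      using t assms(1) unfolding unit_box_def by auto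
    then have "0 \<le> t' 1" "t' 1 \<le> 1"
      using r \<open>d \<noteq> 1\<close> unfolding t'_def by (auto intro: convex_bound_le)
    then show "t' \<in> unit_box d"
      using t unfolding unit_box_def t'_def by auto
    have "(\<Sum>i\<in>{1<..<d}. u i * t' i) = (\<Sum>i\<in>{1<..<d}. u i * t i)" for u
      by (intro sum.cong) (auto simp: t'_def)
    moreover have "(\<Sum>i\<in>{1<..<d}. partial_swap d r a i * t i) = (\<Sum>i\<in>{1<..<d}. a i * t i)"
      by (intro sum.cong) (auto simp: partial_swap_def)
    ultimately show "dot d g t' = dot d g t \<and> dot d (partial_swap d r a) t \<le> dot d a t'"
      using r(3)[symmetric] \<open>d \<noteq> 1\<close> unfolding dot_split by (simp add: t'_def partial_swap_def algebra_simps)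
  qed
  then show ?thesis
    unfolding r_def by (rule thermo_majI[OF g_pos])
qed


(* The Gibbs-preserving map sending all of level d to level 1 and, from every other level, the
   fraction (g 1 - g d) / (1 - g d) to level 1 and the rest to the levels 2..d in proportion to g. *)
definition top_to_ground :: "nat \<Rightarrow> (nat \<Rightarrow> real) \<Rightarrow> (nat \<Rightarrow> real) \<Rightarrow> nat \<Rightarrow> real" where
  "top_to_ground d g a i =
     (if i = 1 then 1 - (1 - a d) * (1 - g 1) / (1 - g d) else (1 - a d) * g i / (1 - g d))"

lemma prob_vec_sum_tail: "1 \<le> d \<Longrightarrow> prob_vec d p \<Longrightarrow> (\<Sum>i\<in>{1<..d}. p i) = 1 - p 1"
  using sum.head[of 1 d p] unfolding prob_vec_def by simp

lemma prob_vec_sum_init: "1 \<le> d \<Longrightarrow> prob_vec d p \<Longrightarrow> (\<Sum>i\<in>{1..<d}. p i) = 1 - p d"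
  using sum.last_plus[of 1 d p] unfolding prob_vec_def by simp

lemma prob_vec_top_to_ground:
  assumes "2 \<le> d" and g_pos: "\<forall>i\<in>{1..d}. 0 < g i" and "prob_vec d g" "g d \<le> g 1"
    and "prob_vec d a"
  shows "prob_vec d (top_to_ground d g a)"
proof -
  have "0 < g 1" "0 < g d" "0 \<le> a 1" "0 \<le> a d"
    using assms unfolding prob_vec_def by auto
  moreover have "g 1 + g d \<le> 1" "a 1 + a d \<le> 1"
    using prob_vec_first_plus_last_le assms by auto
  ultimately have "g 1 < 1" "g d < 1" "0 \<le> 1 - a d" "1 - a d \<le> 1"
    by auto
  then have "(1 - a d) * (1 - g 1) \<le> 1 - g d"
    using \<open>g d \<le> g 1\<close> mult_left_le_one_le[of "1 - g 1" "1 - a d"] by linarith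
  then have "0 \<le> top_to_ground d g a i" if "i \<in> {1..d}" for i
    using that g_pos \<open>g d < 1\<close> \<open>0 \<le> 1 - a d\<close>
    by (auto simp: top_to_ground_def pos_divide_le_eq less_imp_le)
  moreover have "(\<Sum>i\<in>{1<..d}. top_to_ground d g a i) = (1 - a d) / (1 - g d) * (1 - g 1)"
    using prob_vec_sum_tail[of d g] assms
    by (simp add: top_to_ground_def sum_divide_distrib[symmetric] sum_distrib_left[symmetric])
  ultimately show ?thesis
    using sum.head[of 1 d "top_to_ground d g a"] assms(1)
    unfolding prob_vec_def by (simp add: top_to_ground_def)
qed

lemma top_to_ground_self: "g d \<noteq> 1 \<Longrightarrow> top_to_ground d g g = g"
  by (auto simp: top_to_ground_def fun_eq_iff)

definition top_to_ground_adjoint :: "nat \<Rightarrow> (nat \<Rightarrow> real) \<Rightarrow> (nat \<Rightarrow> real) \<Rightarrow> nat \<Rightarrow> real" where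
  "top_to_ground_adjoint d g t i =
     (if i = d then t 1 else ((g 1 - g d) * t 1 + (\<Sum>k\<in>{1<..d}. g k * t k)) / (1 - g d))"

lemma top_to_ground_adjoint_in_unit_box:
  assumes "2 \<le> d" and g_pos: "\<forall>i\<in>{1..d}. 0 < g i" and "prob_vec d g" "g d \<le> g 1"
    and t: "t \<in> unit_box d"
  shows "top_to_ground_adjoint d g t \<in> unit_box d"
proof -
  define w where "w = (\<Sum>k\<in>{1<..d}. g k * t k)"
  have box: "\<forall>i\<in>{1..d}. 0 \<le> g i \<and> 0 \<le> t i \<and> t i \<le> 1"
    using g_pos t unfolding unit_box_def by (auto simp: less_imp_le)
  then have "0 \<le> w"
    unfolding w_def by (auto intro!: sum_nonneg)
  moreover have "w \<le> (\<Sum>i\<in>{1<..d}. g i)"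
    using box unfolding w_def by (auto intro!: sum_mono mult_left_le)
  moreover have "0 < g 1" "0 \<le> t 1" "t 1 \<le> 1" "g 1 + g d \<le> 1"
    using g_pos box prob_vec_first_plus_last_le assms by auto
  ultimately have "g d < 1" "0 \<le> (g 1 - g d) * t 1 + w" "(g 1 - g d) * t 1 + w \<le> 1 - g d"
    using \<open>g d \<le> g 1\<close> mult_left_le[of "t 1" "g 1 - g d"] prob_vec_sum_tail[of d g] assms
    by auto
  then show ?thesis
    using t unfolding unit_box_def top_to_ground_adjoint_def w_def by auto
qed

lemma dot_top_to_ground:
  assumes "2 \<le> d" "g d < 1" "prob_vec d a"
  shows "dot d (top_to_ground d g a) t = dot d a (top_to_ground_adjoint d g t)"
proof -
  define w where "w = (\<Sum>k\<in>{1<..d}. g k * t k)"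
  define c where "c = ((g 1 - g d) * t 1 + w) / (1 - g d)"
  have "(\<Sum>i\<in>{1..<d}. a i * top_to_ground_adjoint d g t i) = (\<Sum>i\<in>{1..<d}. a i) * c"
    unfolding sum_distrib_right c_def w_def
    by (intro sum.cong) (auto simp: top_to_ground_adjoint_def)
  moreover have "top_to_ground_adjoint d g t d = t 1"
    by (simp add: top_to_ground_adjoint_def)
  ultimately have adjoint: "dot d a (top_to_ground_adjoint d g t) = (1 - a d) * c + a d * t 1"
    unfolding dot_def using sum.last_plus[of 1 d "\<lambda>i. a i * top_to_ground_adjoint d g t i"]
      prob_vec_sum_init[of d a] assms
    by simp
  have "(\<Sum>i\<in>{1<..d}. top_to_ground d g a i * t i) = (1 - a d) / (1 - g d) * w"
    unfolding w_def sum_distrib_left by (intro sum.cong) (auto simp: top_to_ground_def)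
  moreover have "top_to_ground d g a 1 = 1 - (1 - a d) * (1 - g 1) / (1 - g d)"
    by (simp add: top_to_ground_def)
  ultimately have "dot d (top_to_ground d g a) t
      = (1 - (1 - a d) * (1 - g 1) / (1 - g d)) * t 1 + (1 - a d) / (1 - g d) * w"
    unfolding dot_def using sum.head[of 1 d "\<lambda>i. top_to_ground d g a i * t i"] assms(1) by simp
  also have "\<dots> = (1 - a d) * c + a d * t 1"
    unfolding c_def using \<open>g d < 1\<close> by (simp add: divide_simps) (simp add: algebra_simps)
  finally show ?thesis
    unfolding adjoint .
qed

lemma thermo_maj_top_to_ground:
  assumes "2 \<le> d" and g_pos: "\<forall>i\<in>{1..d}. 0 < g i" and "prob_vec d g" "g d \<le> g 1"
    and "prob_vec d a"
  shows "thermo_maj d g a (top_to_ground d g a)"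
proof (rule thermo_majI[OF g_pos])
  fix t assume t: "t \<in> unit_box d"
  have "0 < g 1" "g 1 + g d \<le> 1"
    using assms prob_vec_first_plus_last_le by auto
  then have "g d < 1"
    by simp
  then have "dot d g (top_to_ground_adjoint d g t) = dot d g t"
    using dot_top_to_ground[of d g g t] top_to_ground_self[of g d] assms by simp
  moreover have "dot d (top_to_ground d g a) t = dot d a (top_to_ground_adjoint d g t)"
    using dot_top_to_ground \<open>g d < 1\<close> assms by blast
  ultimately show "\<exists>t'\<in>unit_box d. dot d g t' = dot d g t \<and> dot d (top_to_ground d g a) t \<le> dot d a t'"
    using top_to_ground_adjoint_in_unit_box[OF assms(1-4) t] by auto
qed

lemma top_to_ground_then_partial_swap:
  assumes "2 \<le> d" and g_pos: "\<forall>i\<in>{1..d}. 0 < g i" and g: "prob_vec d g" "g d \<le> g 1"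
    and G_pos: "\<forall>i\<in>{1..d}. 0 < G i" and "G d \<le> G 1" and "prob_vec d p"
  obtains p' p'' where "prob_vec d p'" "prob_vec d p''" "thermo_maj d g p p'" "thermo_maj d G p' p''"
    "p'' d = G d / G 1 * (1 - (1 - p d) * (1 - g 1) / (1 - g d))"
proof -
  define p' p'' where "p' = top_to_ground d g p" and "p'' = partial_swap d (G d / G 1) p'"
  have "0 < G 1" "0 < G d"
    using G_pos assms(1) by auto
  then have "0 \<le> G d / G 1" "G d / G 1 \<le> 1"
    using \<open>G d \<le> G 1\<close> by simp_all
  then have "prob_vec d p'" "prob_vec d p''"
    using assms prob_vec_top_to_ground prob_vec_partial_swap by (simp_all add: p'_def p''_def)
  moreover have "thermo_maj d g p p'" "thermo_maj d G p' p''"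
    unfolding p'_def p''_def using assms thermo_maj_top_to_ground thermo_maj_partial_swap by blast+
  moreover have "p'' d = G d / G 1 * (1 - (1 - p d) * (1 - g 1) / (1 - g d))"
    using assms(1) by (simp add: p'_def p''_def partial_swap_def top_to_ground_def)
  ultimately show ?thesis
    using that by blast
qed

lemma partial_swap_then_top_to_ground:
  assumes "2 \<le> d" and g_pos: "\<forall>i\<in>{1..d}. 0 < g i" and g: "prob_vec d g" "g d \<le> g 1"
    and G_pos: "\<forall>i\<in>{1..d}. 0 < G i" and "G d \<le> G 1" and "prob_vec d q"
  obtains q' q'' where "prob_vec d q'" "prob_vec d q''" "thermo_maj d G q q'" "thermo_maj d g q' q''"
    "q'' 1 = 1 - (1 - G d / G 1 * q 1) * (1 - g 1) / (1 - g d)"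
proof -
  define q' q'' where "q' = partial_swap d (G d / G 1) q" and "q'' = top_to_ground d g q'"
  have "0 < G 1" "0 < G d"
    using G_pos assms(1) by auto
  then have "0 \<le> G d / G 1" "G d / G 1 \<le> 1"
    using \<open>G d \<le> G 1\<close> by simp_all
  then have "prob_vec d q'" "prob_vec d q''"
    using assms prob_vec_top_to_ground prob_vec_partial_swap by (simp_all add: q'_def q''_def)
  moreover have "thermo_maj d G q q'" "thermo_maj d g q' q''"
    unfolding q''_def using assms \<open>prob_vec d q'\<close> thermo_maj_top_to_ground thermo_maj_partial_swap
    by (auto simp: q'_def)
  moreover have "q'' 1 = 1 - (1 - G d / G 1 * q 1) * (1 - g 1) / (1 - g d)"
    using assms(1) by (simp add: q'_def q''_def partial_swap_def top_to_ground_def)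
  ultimately show ?thesis
    using that by blast
qed

lemma gibbs_pos: "1 \<le> d \<Longrightarrow> 0 < gibbs d E b k"
  unfolding gibbs_def by (intro divide_pos_pos exp_gt_zero sum_pos) auto

lemma prob_vec_gibbs:
  assumes "1 \<le> d"
  shows "prob_vec d (gibbs d E b)"
proof -
  have "(\<Sum>i=1..d. exp (- b * E i)) \<noteq> 0"
    using assms by (intro sum_pos[THEN less_imp_neq, symmetric]) auto
  then show ?thesis
    using gibbs_pos[OF assms] unfolding prob_vec_def
    by (auto simp: gibbs_def sum_divide_distrib[symmetric] less_imp_le)
qed

lemma gibbs_antimono: "0 \<le> b \<Longrightarrow> E i \<le> E j \<Longrightarrow> gibbs d E b j \<le> gibbs d E b i"
  unfolding gibbs_def by (intro divide_right_mono sum_nonneg) (auto simp: mult_left_mono)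

lemma affine_below_fixpoint:
  fixes A B x :: real
  assumes "0 \<le> A" "A < 1" "x \<le> B / (1 - A)"
  shows "x \<le> A * x + B" "A * x + B \<le> B / (1 - A)"
proof -
  have "x * (1 - A) \<le> B"
    using assms by (simp add: le_divide_eq)
  then show "x \<le> A * x + B"
    by (simp add: algebra_simps)
  have "A * x + B \<le> A * (B / (1 - A)) + B"
    using mult_left_mono[OF assms(3,1)] by simp
  also have "\<dots> = B / (1 - A)"
    using assms by (simp add: field_simps)
  finally show "A * x + B \<le> B / (1 - A)" .
qed

lemma affine_update_fixpoints:
  fixes g1 gd G1 Gd :: real
  assumes "g1 < 1" "gd < 1" "0 < Gd" "0 < G1" and D: "0 < G1 * (1 - gd) - Gd * (1 - g1)"
  defines "A \<equiv> (1 - g1) * Gd / ((1 - gd) * G1)"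
  shows "0 \<le> A" "A < 1"
    "(g1 - gd) * Gd / ((1 - gd) * G1) / (1 - A) = Gd * (g1 - gd) / (G1 * (1 - gd) - Gd * (1 - g1))"
    "(g1 - gd) / (1 - gd) / (1 - A) = G1 * (g1 - gd) / (G1 * (1 - gd) - Gd * (1 - g1))"
proof -
  have denom: "0 < (1 - gd) * G1"
    using assms(2,4) by simp
  then show "0 \<le> A"
    using assms(1,3) unfolding A_def by simp
  show "A < 1"
    using denom D unfolding A_def by (simp add: pos_divide_less_eq algebra_simps)
  have one_minus_A: "1 - A = (G1 * (1 - gd) - Gd * (1 - g1)) / ((1 - gd) * G1)"
    using assms(2,4) unfolding A_def by (simp add: divide_simps)
  show "(g1 - gd) * Gd / ((1 - gd) * G1) / (1 - A) = Gd * (g1 - gd) / (G1 * (1 - gd) - Gd * (1 - g1))"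
    "(g1 - gd) / (1 - gd) / (1 - A) = G1 * (g1 - gd) / (G1 * (1 - gd) - Gd * (1 - g1))"
    unfolding one_minus_A using assms(2,4) D by (simp_all add: divide_simps)
qed

lemma top_population_bounds:
  fixes g1 gd G1 Gd x :: real
  assumes "gd \<le> g1" "g1 < 1" "0 < Gd" "0 < G1" "Gd \<le> x"
    and x_le: "x \<le> Gd * (g1 - gd) / (G1 * (1 - gd) - Gd * (1 - g1))"
  defines "y \<equiv> Gd / G1 * (1 - (1 - x) * (1 - g1) / (1 - gd))"
  shows "y = (1 - g1) * Gd / ((1 - gd) * G1) * x + (g1 - gd) * Gd / ((1 - gd) * G1)"
    and "x \<le> y" "y \<le> Gd * (g1 - gd) / (G1 * (1 - gd) - Gd * (1 - g1))"
proof -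
  define A B where "A = (1 - g1) * Gd / ((1 - gd) * G1)" and "B = (g1 - gd) * Gd / ((1 - gd) * G1)"
  have "0 < Gd * (g1 - gd) / (G1 * (1 - gd) - Gd * (1 - g1))" "0 \<le> Gd * (g1 - gd)"
    using assms(1,3,5) x_le by simp_all
  then have "0 < G1 * (1 - gd) - Gd * (1 - g1)"
    by (simp add: zero_less_divide_iff)
  moreover have "gd < 1"
    using assms(1,2) by simp
  ultimately have "0 \<le> A" "A < 1" "B / (1 - A) = Gd * (g1 - gd) / (G1 * (1 - gd) - Gd * (1 - g1))"
    using affine_update_fixpoints[OF \<open>g1 < 1\<close> _ \<open>0 < Gd\<close> \<open>0 < G1\<close>] unfolding A_def B_def by blast+
  moreover have y: "y = A * x + B"
    using \<open>gd < 1\<close> assms(4) unfolding y_def A_def B_def by (simp add: divide_simps) (simp add: algebra_simps)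
  ultimately show "x \<le> y" "y \<le> Gd * (g1 - gd) / (G1 * (1 - gd) - Gd * (1 - g1))"
    using affine_below_fixpoint[of A x B] x_le by simp_all
  show "y = (1 - g1) * Gd / ((1 - gd) * G1) * x + (g1 - gd) * Gd / ((1 - gd) * G1)"
    using y unfolding A_def B_def .
qed

lemma ground_population_bounds:
  fixes g1 gd G1 Gd x :: real
  assumes "gd \<le> g1" "0 < g1" "g1 < 1" "0 < Gd" "0 < G1" "g1 \<le> x"
    and x_le: "x \<le> G1 * (g1 - gd) / (G1 * (1 - gd) - Gd * (1 - g1))"
  defines "y \<equiv> 1 - (1 - Gd / G1 * x) * (1 - g1) / (1 - gd)"
  shows "y = (1 - g1) * Gd / ((1 - gd) * G1) * x + (g1 - gd) / (1 - gd)"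
    and "x \<le> y" "y \<le> G1 * (g1 - gd) / (G1 * (1 - gd) - Gd * (1 - g1))"
proof -
  define A B where "A = (1 - g1) * Gd / ((1 - gd) * G1)" and "B = (g1 - gd) / (1 - gd)"
  have "0 < G1 * (g1 - gd) / (G1 * (1 - gd) - Gd * (1 - g1))" "0 \<le> G1 * (g1 - gd)"
    using assms(1,2,5,6) x_le by simp_all
  then have "0 < G1 * (1 - gd) - Gd * (1 - g1)"
    by (simp add: zero_less_divide_iff)
  moreover have "gd < 1"
    using assms(1,3) by simp
  ultimately have "0 \<le> A" "A < 1" "B / (1 - A) = G1 * (g1 - gd) / (G1 * (1 - gd) - Gd * (1 - g1))"
    using affine_update_fixpoints[OF \<open>g1 < 1\<close> _ \<open>0 < Gd\<close> \<open>0 < G1\<close>] unfolding A_def B_def by blast+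
  moreover have y: "y = A * x + B"
    using \<open>gd < 1\<close> assms(5) unfolding y_def A_def B_def by (simp add: divide_simps) (simp add: algebra_simps)
  ultimately show "x \<le> y" "y \<le> G1 * (g1 - gd) / (G1 * (1 - gd) - Gd * (1 - g1))"
    using affine_below_fixpoint[of A x B] x_le by simp_all
  show "y = (1 - g1) * Gd / ((1 - gd) * G1) * x + (g1 - gd) / (1 - gd)"
    using y unfolding A_def B_def .
qed

theorem lemma3:
  fixes d :: nat and E :: "nat \<Rightarrow> real" and \<alpha> \<beta> :: real and p q :: "nat \<Rightarrow> real"
  assumes "d \<ge> 2"
    and "\<forall>i j. 1 \<le> i \<longrightarrow> i \<le> j \<longrightarrow> j \<le> d \<longrightarrow> E i \<le> E j"
    and "\<alpha> > \<beta>" and "\<beta> \<ge> 0"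
    and "prob_vec d p" and "prob_vec d q"
    and "gibbs d E \<beta> d \<le> p d"
    and "p d \<le> gibbs d E \<beta> d * (gibbs d E \<alpha> 1 - gibbs d E \<alpha> d) /
           (gibbs d E \<beta> 1 * (1 - gibbs d E \<alpha> d) - gibbs d E \<beta> d * (1 - gibbs d E \<alpha> 1))"
    and "gibbs d E \<alpha> 1 \<le> q 1"
    and "q 1 \<le> gibbs d E \<beta> 1 * (gibbs d E \<alpha> 1 - gibbs d E \<alpha> d) /
           (gibbs d E \<beta> 1 * (1 - gibbs d E \<alpha> d) - gibbs d E \<beta> d * (1 - gibbs d E \<alpha> 1))"
  shows "\<exists>p' p'' q' q''. prob_vec d p' \<and> prob_vec d p'' \<and> prob_vec d q' \<and> prob_vec d q'' \<and>
     thermo_maj d (gibbs d E \<alpha>) p p' \<and> thermo_maj d (gibbs d E \<beta>) p' p'' \<and>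
     thermo_maj d (gibbs d E \<beta>) q q' \<and> thermo_maj d (gibbs d E \<alpha>) q' q'' \<and>
     p'' d = (1 - gibbs d E \<alpha> 1) * gibbs d E \<beta> d / ((1 - gibbs d E \<alpha> d) * gibbs d E \<beta> 1) * p d
             + (gibbs d E \<alpha> 1 - gibbs d E \<alpha> d) * gibbs d E \<beta> d / ((1 - gibbs d E \<alpha> d) * gibbs d E \<beta> 1) \<and>
     q'' 1 = (1 - gibbs d E \<alpha> 1) * gibbs d E \<beta> d / ((1 - gibbs d E \<alpha> d) * gibbs d E \<beta> 1) * q 1
             + (gibbs d E \<alpha> 1 - gibbs d E \<alpha> d) / (1 - gibbs d E \<alpha> d) \<and>
     p d \<le> p'' d \<and>
     p'' d \<le> gibbs d E \<beta> d * (gibbs d E \<alpha> 1 - gibbs d E \<alpha> d) /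
           (gibbs d E \<beta> 1 * (1 - gibbs d E \<alpha> d) - gibbs d E \<beta> d * (1 - gibbs d E \<alpha> 1)) \<and>
     q 1 \<le> q'' 1 \<and>
     q'' 1 \<le> gibbs d E \<beta> 1 * (gibbs d E \<alpha> 1 - gibbs d E \<alpha> d) /
           (gibbs d E \<beta> 1 * (1 - gibbs d E \<alpha> d) - gibbs d E \<beta> d * (1 - gibbs d E \<alpha> 1))"
proof -
  define g G where "g = gibbs d E \<alpha>" and "G = gibbs d E \<beta>"
  have "1 \<le> d" "E 1 \<le> E d" "0 \<le> \<alpha>"
    using assms(1-4) by auto
  then have g_pos: "\<forall>i\<in>{1..d}. 0 < g i" and G_pos: "\<forall>i\<in>{1..d}. 0 < G i"
    and g: "prob_vec d g" "g d \<le> g 1" and "G d \<le> G 1"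
    using assms(4) by (simp_all add: g_def G_def gibbs_pos prob_vec_gibbs gibbs_antimono)
  have "0 < g 1" "0 < G 1" "0 < G d"
    using g_pos G_pos \<open>1 \<le> d\<close> by auto
  moreover have "g 1 < 1"
    using prob_vec_first_plus_last_le[OF assms(1) g(1)] g_pos \<open>1 \<le> d\<close> by force
  moreover obtain p' p'' where "prob_vec d p'" "prob_vec d p''" "thermo_maj d g p p'" "thermo_maj d G p' p''"
    "p'' d = G d / G 1 * (1 - (1 - p d) * (1 - g 1) / (1 - g d))"
    using top_to_ground_then_partial_swap[OF assms(1) g_pos g G_pos \<open>G d \<le> G 1\<close> assms(5)] .
  moreover obtain q' q'' where "prob_vec d q'" "prob_vec d q''" "thermo_maj d G q q'" "thermo_maj d g q' q''"
    "q'' 1 = 1 - (1 - G d / G 1 * q 1) * (1 - g 1) / (1 - g d)"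
    using partial_swap_then_top_to_ground[OF assms(1) g_pos g G_pos \<open>G d \<le> G 1\<close> assms(6)] .
  ultimately show ?thesis
    using top_population_bounds[of "g d" "g 1" "G d" "G 1" "p d"]
      ground_population_bounds[of "g d" "g 1" "G d" "G 1" "q 1"] assms(7-10) g(2)
    unfolding g_def[symmetric] G_def[symmetric] by metis
qed

end
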